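(* Let $k,T\in\mathbb{N}$ and let $w\in\{0,1\}^T$ be a characteristic string which violates $k$-slot-CP. Then there exist a decomposition $w=xyz$ with $|y|\ge k+1$ and a fork $\hat F\vdash xy$ such that $\hat F$ is $x$-balanced.
   Context: Characteristic strings and forks. A characteristic string is $w=w_1\dots w_n\in\{0,1\}^n$; index $i$ is honest if $w_i=0$ and adversarial if $w_i=1$. A fork for $w$ is a rooted tree $F=(V,E)$ with edges directed away from the root $r$, together with a labeling $\ell:V\to\{0,\dots,n\}$, such that (F1) $\ell(r)=0$; (F2) labels strictly increase along every directed path; (F3) every honest index is the label of exactly one vertex; (F4) if $i<j$ are honest indices then the vertex labeled $i$ has strictly smaller depth than the vertex labeled $j$. Write $F\vdash w$. A vertex is honest if it is the root or its label is an honest index. A tine is a directed path starting at the root (not necessarily ending at a leaf); its length is its number of edges, $\ell(t)$ is the label of its last vertex, the depth of a vertex is the length of the tine ending at it, and $\mathrm{height}(F)$ is the maximum tine length. A tine $t$ is viable if its length is at least the depth of every honest vertex $v$ with $\ell(v)\le\ell(t)$. The trimmed tine $t^{\lceil k}$ is the portion of $t$ consisting of vertices labeled in $\{0,\dots,\ell(t)-k\}$; $t_1\preceq t_2$ means $t_1$ is a prefix of $t_2$. A fork $F\vdash w$ satisfies $k$-slot-CP if for all pairs of viable tines $t_1,t_2$ with $\ell(t_1)\le\ell(t_2)$ we have $t_1^{\lceil k}\preceq t_2$; $w$ violates $k$-slot-CP if some fork for $w$ does not satisfy it. For $w=xy$, tines $t_1,t_2$ of $F\vdash xy$ are disjoint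 over $y$ (written $t_1\not\sim_x t_2$) if they share no edge terminating at a vertex whose label is an index of $y$ (i.e., a label exceeding $|x|$). A fork $F\vdash xy$ is $x$-balanced if it contains tines $t_1\not\sim_x t_2$ with $\mathrm{length}(t_1)=\mathrm{length}(t_2)=\mathrm{height}(F)$. *)

theory Defs
  imports Main "HOL-Library.Sublist"
begin

text \<open>Characteristic strings: lists of booleans, True = 1 (adversarial), False = 0 (honest).
  Indices are 1-based: index i refers to the list element w ! (i - 1).\<close>

definition honest_idx :: "bool list \<Rightarrow> nat \<Rightarrow> bool" where
  "honest_idx w i \<longleftrightarrow> 1 \<le> i \<and> i \<le> length w \<and> \<not> w ! (i - 1)"

record lgraph =
  verts :: "nat set"
  edges :: "(nat \<times> nat) set"
  root :: nat
  lab :: "nat \<Rightarrow> nat"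

definition is_tine :: "lgraph \<Rightarrow> nat list \<Rightarrow> bool" where
  "is_tine F t \<longleftrightarrow> t \<noteq> [] \<and> hd t = root F \<and> set t \<subseteq> verts F \<and>
     (\<forall>i. Suc i < length t \<longrightarrow> (t ! i, t ! Suc i) \<in> edges F)"

definition tine_len :: "nat list \<Rightarrow> nat" where
  "tine_len t = length t - 1"

definition tine_lab :: "lgraph \<Rightarrow> nat list \<Rightarrow> nat" where
  "tine_lab F t = lab F (last t)"

definition rooted_tree :: "lgraph \<Rightarrow> bool" where
  "rooted_tree F \<longleftrightarrow> finite (verts F) \<and> root F \<in> verts F \<and> edges F \<subseteq> verts F \<times> verts F \<and>
     (\<forall>v \<in> verts F. \<exists>!t. is_tine F t \<and> last t = v)"

definition depth :: "lgraph \<Rightarrow> nat \<Rightarrow> nat" where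
  "depth F v = tine_len (THE t. is_tine F t \<and> last t = v)"

definition height :: "lgraph \<Rightarrow> nat" where
  "height F = Max {tine_len t | t. is_tine F t}"

definition is_fork :: "lgraph \<Rightarrow> bool list \<Rightarrow> bool" where
  "is_fork F w \<longleftrightarrow> rooted_tree F \<and>
     (\<forall>v \<in> verts F. lab F v \<le> length w) \<and>
     lab F (root F) = 0 \<and>
     (\<forall>(u, v) \<in> edges F. lab F u < lab F v) \<and>
     (\<forall>i. honest_idx w i \<longrightarrow> card {v \<in> verts F. lab F v = i} = 1) \<and>
     (\<forall>u \<in> verts F. \<forall>v \<in> verts F. honest_idx w (lab F u) \<and> honest_idx w (lab F v) \<and>
        lab F u < lab F v \<longrightarrow> depth F u < depth F v)"

definition honest_vertex :: "lgraph \<Rightarrow> bool list \<Rightarrow> nat \<Rightarrow> bool" where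
  "honest_vertex F w v \<longleftrightarrow> v = root F \<or> honest_idx w (lab F v)"

definition viable :: "lgraph \<Rightarrow> bool list \<Rightarrow> nat list \<Rightarrow> bool" where
  "viable F w t \<longleftrightarrow> is_tine F t \<and>
     (\<forall>v \<in> verts F. honest_vertex F w v \<and> lab F v \<le> tine_lab F t \<longrightarrow> depth F v \<le> tine_len t)"

text \<open>Trimmed tine: the vertices of t with labels in {0, ..., l(t) - k} (possibly empty
  when l(t) < k).\<close>
definition trim :: "lgraph \<Rightarrow> nat \<Rightarrow> nat list \<Rightarrow> nat list" where
  "trim F k t = filter (\<lambda>v. int (lab F v) \<le> int (tine_lab F t) - int k) t"

definition slot_CP :: "nat \<Rightarrow> lgraph \<Rightarrow> bool list \<Rightarrow> bool" where
  "slot_CP k F w \<longleftrightarrow> (\<forall>t1 t2. viable F w t1 \<and> viable F w t2 \<and> tine_lab F t1 \<le> tine_lab F t2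
       \<longrightarrow> prefix (trim F k t1) t2)"

definition violates_slot_CP :: "nat \<Rightarrow> bool list \<Rightarrow> bool" where
  "violates_slot_CP k w \<longleftrightarrow> (\<exists>F. is_fork F w \<and> \<not> slot_CP k F w)"

definition tine_edges :: "nat list \<Rightarrow> (nat \<times> nat) set" where
  "tine_edges t = set (zip t (tl t))"

text \<open>Disjoint over y (w = xy): no shared edge terminating at a vertex labelled > |x|.\<close>
definition disjoint_over :: "lgraph \<Rightarrow> bool list \<Rightarrow> nat list \<Rightarrow> nat list \<Rightarrow> bool" where
  "disjoint_over F x t1 t2 \<longleftrightarrow>
     (\<forall>(u, v) \<in> tine_edges t1 \<inter> tine_edges t2. \<not> lab F v > length x)"

definition x_balanced :: "lgraph \<Rightarrow> bool list \<Rightarrow> bool" where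
  "x_balanced F x \<longleftrightarrow> (\<exists>t1 t2. is_tine F t1 \<and> is_tine F t2 \<and> disjoint_over F x t1 t2 \<and>
     tine_len t1 = height F \<and> tine_len t2 = height F)"

end

theory Submission
  imports Defs
begin

text \<open>Let viable tines \<open>t\<^sub>1, t\<^sub>2\<close> with \<open>\<ell>(t\<^sub>1) \<le> \<ell>(t\<^sub>2)\<close> witness the violation
  and let \<open>a\<close> be the last vertex of the trimmed tine \<open>t\<^sub>1\<^sup>\<lceil>\<^sup>k\<close>: then \<open>a\<close> lies on \<open>t\<^sub>1\<close> but not on
  \<open>t\<^sub>2\<close>, and \<open>\<ell>(a) + k \<le> \<ell>(t\<^sub>1)\<close>. Tines through \<open>a\<close> and tines avoiding \<open>a\<close> share only vertices
  of label \<open>< \<ell>(a)\<close>. Given two such tines of equal length \<open>m\<close> with labels \<open>\<le> L\<close>, where every honest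
  vertex of label \<open>\<le> L\<close> has depth \<open>\<le> m\<close>, the vertices of label \<open>\<le> L\<close> and depth \<open>\<le> m\<close> form a
  fork for \<open>w\<^sub>1 \<dots> w\<^sub>L\<close> of height \<open>m\<close> that is \<open>x\<close>-balanced for \<open>x = w\<^sub>1 \<dots> w\<^sub>j\<close>, \<open>j = \<ell>(a) - 1\<close>.
  Such a pair with \<open>L \<ge> \<ell>(t\<^sub>1)\<close> is found by induction on \<open>length(t\<^sub>2) - length(t\<^sub>1)\<close>: truncate the
  longer of \<open>t\<^sub>1, t\<^sub>2\<close>, unless some honest vertex of label \<open>\<le> \<ell>(t\<^sub>2)\<close> is deeper than \<open>t\<^sub>1\<close>. Then
  let \<open>h\<close> be the one of least label: if its tine avoids \<open>a\<close>, pair it with \<open>t\<^sub>1\<close> and take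
  \<open>L = \<ell>(h) - 1\<close>; otherwise its tine is viable and replaces \<open>t\<^sub>1\<close>.\<close>

section \<open>Tines of rooted trees\<close>

lemma is_tine_take: "is_tine F t \<Longrightarrow> 0 < n \<Longrightarrow> is_tine F (take n t)"
  unfolding is_tine_def by (auto simp: hd_take dest: in_set_takeD)

lemma tine_len_take: "m \<le> tine_len t \<Longrightarrow> tine_len (take (Suc m) t) = m"
  unfolding tine_len_def by auto

lemma last_in_verts: "is_tine F t \<Longrightarrow> last t \<in> verts F"
  unfolding is_tine_def by auto

lemma is_tine_unique:
  assumes "rooted_tree F" "is_tine F t" "is_tine F s" "last t = last s"
  shows "t = s"
  using assms last_in_verts[OF assms(2)] unfolding rooted_tree_def by metis

lemma depth_nth:
  assumes tree: "rooted_tree F" and t: "is_tine F t" and i: "i < length t"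
  shows "depth F (t ! i) = i"
proof -
  have prefix: "is_tine F (take (Suc i) t)" "last (take (Suc i) t) = t ! i"
    using is_tine_take[OF t, of "Suc i"] i by (simp_all add: take_Suc_conv_app_nth)
  have "(THE s. is_tine F s \<and> last s = t ! i) = take (Suc i) t"
  proof (rule the_equality)
    show "s = take (Suc i) t" if "is_tine F s \<and> last s = t ! i" for s
      using that prefix by (intro is_tine_unique[OF tree]) auto
  qed (use prefix in simp)
  then show ?thesis
    unfolding depth_def tine_len_def using i by simp
qed

lemma depth_last: "rooted_tree F \<Longrightarrow> is_tine F t \<Longrightarrow> depth F (last t) = tine_len t"
  using depth_nth[of F t "length t - 1"] unfolding is_tine_def tine_len_def
  by (simp add: last_conv_nth)

lemma depth_root: "rooted_tree F \<Longrightarrow> depth F (root F) = 0"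
  using depth_nth[of F "[root F]" 0] unfolding rooted_tree_def is_tine_def by simp

lemma ex_tine_to: "rooted_tree F \<Longrightarrow> v \<in> verts F \<Longrightarrow> \<exists>t. is_tine F t \<and> last t = v"
  unfolding rooted_tree_def by blast

lemma take_Suc_eq_if_nth_eq:
  assumes tree: "rooted_tree F" and t1: "is_tine F t1" and t2: "is_tine F t2"
    and "i < length t1" "j < length t2" "t1 ! i = t2 ! j"
  shows "i = j \<and> take (Suc i) t1 = take (Suc i) t2"
proof -
  have "i = j"
    using depth_nth[OF tree t1] depth_nth[OF tree t2] assms(4-6) by metis
  moreover have "take (Suc i) t1 = take (Suc i) t2"
  proof (rule is_tine_unique[OF tree])
    show "is_tine F (take (Suc i) t1)" "is_tine F (take (Suc i) t2)"
      using is_tine_take t1 t2 by blast+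
    show "last (take (Suc i) t1) = last (take (Suc i) t2)"
      using assms(4-6) \<open>i = j\<close> by (simp add: take_Suc_conv_app_nth)
  qed
  ultimately show ?thesis by simp
qed

lemma prefix_if_last_in_tine:
  assumes tree: "rooted_tree F" and t1: "is_tine F t1" and t2: "is_tine F t2"
    and p: "prefix p t1" "p \<noteq> []" and last: "last p \<in> set t2"
  shows "prefix p t2"
proof -
  define n where "n = length p - 1"
  have p_eq: "p = take (Suc n) t1"
    using p unfolding n_def prefix_def by (cases p) auto
  have n: "n < length t1"
    using prefix_length_le[OF p(1)] p(2) unfolding n_def by (cases p) auto
  obtain j where "j < length t2" "t2 ! j = last p"
    using last by (metis in_set_conv_nth)
  moreover have "last p = t1 ! n"
    using p_eq n by (simp add: take_Suc_conv_app_nth)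
  ultimately have "take (Suc n) t1 = take (Suc n) t2"
    using take_Suc_eq_if_nth_eq[OF tree t1 t2 n] by metis
  then show ?thesis
    using p_eq by (metis take_is_prefix)
qed

section \<open>Labels along tines\<close>

lemma is_fork_rooted_tree: "is_fork F w \<Longrightarrow> rooted_tree F"
  unfolding is_fork_def by simp

lemma sorted_wrt_lab:
  assumes fork: "is_fork F w" and t: "is_tine F t"
  shows "sorted_wrt (\<lambda>u v. lab F u < lab F v) t"
proof -
  have "transp (\<lambda>u v. lab F u < lab F v)"
    by (auto intro: transpI)
  moreover have "lab F (t ! i) < lab F (t ! Suc i)" if "Suc i < length t" for i
    using fork t that unfolding is_fork_def is_tine_def by blast
  ultimately show ?thesis
    by (simp add: sorted_wrt_iff_nth_Suc_transp)
qed

lemma lab_butlast_less: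
  assumes "is_fork F w" "is_tine F t" "v \<in> set (butlast t)"
  shows "lab F v < tine_lab F t"
  using sorted_wrt_lab[OF assms(1,2)] assms(3) unfolding tine_lab_def
  by (cases t rule: rev_cases) (auto simp: sorted_wrt_append)

lemma lab_le_tine_lab:
  assumes "is_fork F w" "is_tine F t" "v \<in> set t"
  shows "lab F v \<le> tine_lab F t"
  using lab_butlast_less[OF assms(1,2)] assms(3) unfolding tine_lab_def
  by (cases t rule: rev_cases) fastforce+

lemma lab_take_less:
  assumes "is_fork F w" "is_tine F t" "m < tine_len t" "v \<in> set (take (Suc m) t)"
  shows "lab F v < tine_lab F t"
proof -
  have "set (take (Suc m) t) \<subseteq> set (butlast t)"
    using assms(3) unfolding butlast_conv_take tine_len_def by (simp add: set_take_subset_set_take)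
  then show ?thesis
    using lab_butlast_less[OF assms(1,2)] assms(4) by blast
qed

lemma tine_lab_le_length: "is_fork F w \<Longrightarrow> is_tine F t \<Longrightarrow> tine_lab F t \<le> length w"
  unfolding is_fork_def tine_lab_def using last_in_verts by blast

lemma lab_common_less:
  assumes fork: "is_fork F w" and t1: "is_tine F t1" and t2: "is_tine F t2"
    and q: "q \<in> set t1" "q \<in> set t2" and a: "a \<in> set t1" "a \<notin> set t2"
  shows "lab F q < lab F a"
proof -
  have tree: "rooted_tree F"
    using fork by (rule is_fork_rooted_tree)
  obtain i j where ij: "i < length t1" "j < length t2" "t1 ! i = q" "t2 ! j = q"
    using q by (metis in_set_conv_nth)
  obtain r where r: "r < length t1" "t1 ! r = a"
    using a by (metis in_set_conv_nth)
  have "t1 ! i = t2 ! j"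
    using ij(3,4) by simp
  then have "take (Suc i) t1 = take (Suc i) t2"
    using take_Suc_eq_if_nth_eq[OF tree t1 t2 ij(1,2)] by blast
  then have "\<not> r \<le> i"
    using a r by (metis in_set_takeD less_Suc_eq_le nth_mem nth_take length_take min_less_iff_conj)
  then show ?thesis
    using sorted_wrt_nth_less[OF sorted_wrt_lab[OF fork t1]] r ij by fastforce
qed

lemma filter_eq_takeWhile_if_sorted:
  fixes f :: "'a \<Rightarrow> 'b::linorder"
  assumes "sorted_wrt (\<lambda>u v. f u < f v) xs"
  shows "filter (\<lambda>v. f v \<le> c) xs = takeWhile (\<lambda>v. f v \<le> c) xs"
  using assms
proof (induction xs)
  case (Cons x xs)
  show ?case
  proof (cases "f x \<le> c")
    case False
    have "\<not> f y \<le> c" if "y \<in> set xs" for y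
      using Cons.prems that False by auto
    then show ?thesis
      using False by (simp add: filter_empty_conv)
  qed (use Cons in simp)
qed simp

lemma trim_is_prefix:
  assumes "is_fork F w" "is_tine F t"
  shows "prefix (trim F k t) t"
proof -
  have "sorted_wrt (\<lambda>u v. int (lab F u) < int (lab F v)) t"
    using sorted_wrt_lab[OF assms] by simp
  then have "trim F k t = takeWhile (\<lambda>v. int (lab F v) \<le> int (tine_lab F t) - int k) t"
    unfolding trim_def by (rule filter_eq_takeWhile_if_sorted)
  then show ?thesis
    by (simp add: takeWhile_is_prefix)
qed

lemma viable_depth_le:
  "viable F w t \<Longrightarrow> v \<in> verts F \<Longrightarrow> honest_idx w (lab F v) \<Longrightarrow> lab F v \<le> tine_lab F t
    \<Longrightarrow> depth F v \<le> tine_len t"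
  unfolding viable_def honest_vertex_def by blast

lemma honest_vertex_unique:
  assumes fork: "is_fork F w" and "u \<in> verts F" "v \<in> verts F"
    and "honest_idx w (lab F u)" "lab F u = lab F v"
  shows "u = v"
proof -
  have "card {x \<in> verts F. lab F x = lab F u} = 1"
    using fork assms(4) unfolding is_fork_def by blast
  then obtain c where "{x \<in> verts F. lab F x = lab F u} = {c}"
    by (rule card_1_singletonE)
  then show ?thesis
    using assms(2,3,5) by (metis (mono_tags, lifting) mem_Collect_eq singletonD)
qed

lemma viable_if_honest_last:
  assumes fork: "is_fork F w" and t: "is_tine F t" and honest: "honest_idx w (lab F (last t))"
  shows "viable F w t"
  unfolding viable_def
proof (intro conjI t ballI impI)
  have tree: "rooted_tree F"
    using fork by (rule is_fork_rooted_tree)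
  fix u assume u: "u \<in> verts F" "honest_vertex F w u \<and> lab F u \<le> tine_lab F t"
  have last: "last t \<in> verts F" "depth F (last t) = tine_len t"
    using last_in_verts[OF t] depth_last[OF tree t] by simp_all
  show "depth F u \<le> tine_len t"
  proof (cases "u = root F")
    case False
    then have honest_u: "honest_idx w (lab F u)"
      using u unfolding honest_vertex_def by simp
    show ?thesis
    proof (cases "lab F u < lab F (last t)")
      case True
      then have "depth F u < depth F (last t)"
        using fork u(1) last(1) honest_u honest unfolding is_fork_def by blast
      then show ?thesis
        using last(2) by simp
    next
      case False
      then have "u = last t"
        using honest_vertex_unique[OF fork u(1) last(1) honest_u] u(2) unfolding tine_lab_def by simp
      then show ?thesis
        using last(2) by simp
    qed
  qed (simp add: depth_root[OF tree])
qed

section \<open>Cutting a fork down to bounded label and depth\<close>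

lemma snd_in_set_if_tine_edge: "(u, v) \<in> tine_edges t \<Longrightarrow> v \<in> set t"
  unfolding tine_edges_def by (cases t) (auto dest: set_zip_rightD)

definition restrict :: "lgraph \<Rightarrow> nat set \<Rightarrow> lgraph" where
  "restrict F V = F\<lparr>verts := V, edges := edges F \<inter> V \<times> V\<rparr>"

lemma restrict_simps [simp]:
  "verts (restrict F V) = V" "edges (restrict F V) = edges F \<inter> V \<times> V"
  "root (restrict F V) = root F" "lab (restrict F V) = lab F"
  unfolding restrict_def by simp_all

definition rooted_subtree :: "lgraph \<Rightarrow> nat set \<Rightarrow> bool" where
  "rooted_subtree F V \<longleftrightarrow> V \<subseteq> verts F \<and> root F \<in> V \<and>
     (\<forall>t. is_tine F t \<and> last t \<in> V \<longrightarrow> set t \<subseteq> V)"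

lemma is_tine_restrict:
  "V \<subseteq> verts F \<Longrightarrow> is_tine (restrict F V) t \<longleftrightarrow> is_tine F t \<and> set t \<subseteq> V"
  unfolding is_tine_def by (auto simp: subset_iff)

lemma is_tine_restrict_if_last:
  assumes "rooted_subtree F V" "is_tine F t" "last t \<in> V"
  shows "is_tine (restrict F V) t"
  using assms is_tine_restrict[of V F t] unfolding rooted_subtree_def by blast

lemma rooted_tree_restrict:
  assumes tree: "rooted_tree F" and sub: "rooted_subtree F V"
  shows "rooted_tree (restrict F V)"
proof -
  have V: "V \<subseteq> verts F"
    using sub unfolding rooted_subtree_def by simp
  have "\<exists>!t. is_tine (restrict F V) t \<and> last t = v" if v: "v \<in> V" for v
  proof -
    obtain t where t: "is_tine F t" "last t = v"
      using ex_tine_to[OF tree] V v by blast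
    show ?thesis
    proof (rule ex1I[of _ t])
      show "is_tine (restrict F V) t \<and> last t = v"
        using is_tine_restrict_if_last[OF sub t(1)] t(2) v by simp
      show "s = t" if "is_tine (restrict F V) s \<and> last s = v" for s
        using that is_tine_restrict[OF V] is_tine_unique[OF tree _ t(1)] t(2) by simp
    qed
  qed
  then show ?thesis
    using tree sub unfolding rooted_tree_def rooted_subtree_def by (auto intro: finite_subset)
qed

lemma depth_restrict:
  assumes tree: "rooted_tree F" and sub: "rooted_subtree F V" and v: "v \<in> V"
  shows "depth (restrict F V) v = depth F v"
proof -
  obtain t where t: "is_tine F t" "last t = v"
    using ex_tine_to[OF tree] sub v unfolding rooted_subtree_def by blast
  have "is_tine (restrict F V) t"
    using is_tine_restrict_if_last[OF sub t(1)] t(2) v by simp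
  from depth_last[OF rooted_tree_restrict[OF tree sub] this] show ?thesis
    using depth_last[OF tree t(1)] t(2) by simp
qed

lemma height_restrict:
  assumes tree: "rooted_tree F" and sub: "rooted_subtree F V"
    and shallow: "\<forall>v \<in> V. depth F v \<le> m"
    and s: "is_tine F s" "set s \<subseteq> V" "tine_len s = m"
  shows "height (restrict F V) = m"
proof -
  have V: "V \<subseteq> verts F"
    using sub unfolding rooted_subtree_def by simp
  have "tine_len t \<le> m" if "is_tine (restrict F V) t" for t
  proof -
    have "last t \<in> V"
      using last_in_verts[OF that] by simp
    then show ?thesis
      using that shallow depth_last[OF tree] is_tine_restrict[OF V] by fastforce
  qed
  moreover have "is_tine (restrict F V) s"
    using s is_tine_restrict[OF V] by blast
  ultimately show ?thesis
    unfolding height_def using s(3) by (intro Max_eqI) (auto intro: finite_subset[of _ "{..m}"])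
qed

lemma honest_idx_take: "honest_idx (take L w) i \<longleftrightarrow> honest_idx w i \<and> i \<le> L"
  unfolding honest_idx_def by auto

lemma rooted_subtree_lab_depth_le:
  assumes fork: "is_fork F w"
  shows "rooted_subtree F {v \<in> verts F. lab F v \<le> L \<and> depth F v \<le> m}"
  unfolding rooted_subtree_def
proof (intro conjI allI impI subsetI)
  have tree: "rooted_tree F"
    using fork by (rule is_fork_rooted_tree)
  show "v \<in> verts F" if "v \<in> {v \<in> verts F. lab F v \<le> L \<and> depth F v \<le> m}" for v
    using that by simp
  show "root F \<in> {v \<in> verts F. lab F v \<le> L \<and> depth F v \<le> m}"
    using fork depth_root[OF tree] unfolding is_fork_def rooted_tree_def by simp
  fix t u assume t: "is_tine F t \<and> last t \<in> {v \<in> verts F. lab F v \<le> L \<and> depth F v \<le> m}"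
    and u: "u \<in> set t"
  obtain i where i: "i < length t" "u = t ! i"
    using u by (metis in_set_conv_nth)
  have "lab F u \<le> lab F (last t)"
    using lab_le_tine_lab[OF fork _ u] t unfolding tine_lab_def by simp
  moreover have "depth F u \<le> depth F (last t)"
    using depth_nth[OF tree _ i(1)] depth_last[OF tree] t i unfolding tine_len_def by simp
  ultimately show "u \<in> {v \<in> verts F. lab F v \<le> L \<and> depth F v \<le> m}"
    using t u unfolding is_tine_def by auto
qed

lemma is_fork_restrict_lab_depth_le:
  assumes fork: "is_fork F w" and L: "L \<le> length w"
    and honest: "\<forall>v \<in> verts F. honest_idx w (lab F v) \<and> lab F v \<le> L \<longrightarrow> depth F v \<le> m"
  shows "is_fork (restrict F {v \<in> verts F. lab F v \<le> L \<and> depth F v \<le> m}) (take L w)"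
    (is "is_fork ?G _")
proof -
  let ?V = "{v \<in> verts F. lab F v \<le> L \<and> depth F v \<le> m}"
  have tree: "rooted_tree F"
    using fork by (rule is_fork_rooted_tree)
  have sub: "rooted_subtree F ?V"
    using rooted_subtree_lab_depth_le[OF fork] .
  have same_depth: "depth ?G v = depth F v" if "v \<in> ?V" for v
    using depth_restrict[OF tree sub that] .
  have same_honest: "{v \<in> ?V. lab F v = i} = {v \<in> verts F. lab F v = i}"
    if "honest_idx w i" "i \<le> L" for i
    using honest that by auto
  show ?thesis
    unfolding is_fork_def
  proof (intro conjI)
    show "rooted_tree ?G"
      using rooted_tree_restrict[OF tree sub] .
    show "\<forall>v \<in> verts ?G. lab ?G v \<le> length (take L w)"
      using L by simp
    show "lab ?G (root ?G) = 0" "\<forall>(u, v) \<in> edges ?G. lab ?G u < lab ?G v"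
      using fork unfolding is_fork_def by auto
    show "\<forall>i. honest_idx (take L w) i \<longrightarrow> card {v \<in> verts ?G. lab ?G v = i} = 1"
      using fork same_honest unfolding is_fork_def honest_idx_take by simp
    show "\<forall>u \<in> verts ?G. \<forall>v \<in> verts ?G. honest_idx (take L w) (lab ?G u) \<and>
        honest_idx (take L w) (lab ?G v) \<and> lab ?G u < lab ?G v \<longrightarrow> depth ?G u < depth ?G v"
      using fork same_depth unfolding is_fork_def honest_idx_take by simp
  qed
qed

section \<open>Balanced pairs of tines\<close>

definition balanced_pair ::
    "lgraph \<Rightarrow> bool list \<Rightarrow> nat \<Rightarrow> nat \<Rightarrow> nat \<Rightarrow> nat list \<Rightarrow> nat list \<Rightarrow> bool" where
  "balanced_pair F w B L m s1 s2 \<longleftrightarrow>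
     is_tine F s1 \<and> is_tine F s2 \<and> tine_len s1 = m \<and> tine_len s2 = m \<and>
     (\<forall>v \<in> set s1 \<union> set s2. lab F v \<le> L) \<and>
     (\<forall>v \<in> verts F. honest_idx w (lab F v) \<and> lab F v \<le> L \<longrightarrow> depth F v \<le> m) \<and>
     (\<forall>v \<in> set s1 \<inter> set s2. lab F v < B)"

lemma ex_x_balanced_fork_if_balanced_pair:
  assumes fork: "is_fork F w" and pair: "balanced_pair F w B L m s1 s2" and L: "L \<le> length w"
  shows "\<exists>G. is_fork G (take L w) \<and> x_balanced G (take (B - 1) w)"
proof -
  define V where "V = {v \<in> verts F. lab F v \<le> L \<and> depth F v \<le> m}"
  have tree: "rooted_tree F"
    using fork by (rule is_fork_rooted_tree)
  have sub: "rooted_subtree F V"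
    unfolding V_def using rooted_subtree_lab_depth_le[OF fork] .
  have VF: "V \<subseteq> verts F"
    using sub unfolding rooted_subtree_def by simp
  have in_V: "set s \<subseteq> V" if s: "is_tine F s" "tine_len s = m" "\<forall>v \<in> set s. lab F v \<le> L" for s
  proof
    fix v assume "v \<in> set s"
    then obtain i where "i < length s" "v = s ! i"
      by (metis in_set_conv_nth)
    then show "v \<in> V"
      using s depth_nth[OF tree s(1)] unfolding V_def is_tine_def tine_len_def by auto
  qed
  have s: "is_tine F s1" "is_tine F s2" "set s1 \<subseteq> V" "set s2 \<subseteq> V" "tine_len s1 = m" "tine_len s2 = m"
    using pair in_V unfolding balanced_pair_def by auto
  have "height (restrict F V) = m"
    using height_restrict[OF tree sub _ s(1,3,5)] unfolding V_def by simp
  moreover have "disjoint_over (restrict F V) (take (B - 1) w) s1 s2"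
    unfolding disjoint_over_def
  proof clarify
    fix u v assume "(u, v) \<in> tine_edges s1" "(u, v) \<in> tine_edges s2"
    then have v: "v \<in> set s1" "v \<in> set s2"
      by (auto dest: snd_in_set_if_tine_edge)
    then have "lab F v < B"
      using pair unfolding balanced_pair_def by blast
    moreover have "lab F v \<le> length w"
      using v(1) s(1) fork unfolding is_tine_def is_fork_def by blast
    moreover assume "length (take (B - 1) w) < lab (restrict F V) v"
    ultimately show False
      by simp
  qed
  ultimately have "x_balanced (restrict F V) (take (B - 1) w)"
    using s is_tine_restrict[OF VF] unfolding x_balanced_def by auto
  then show ?thesis
    using is_fork_restrict_lab_depth_le[OF fork L] pair unfolding V_def balanced_pair_def by blast
qed

lemma honest_depth_le_or_least_deeperE:
  obtains (shallow) "\<forall>v \<in> verts F. honest_idx w (lab F v) \<and> lab F v \<le> L \<longrightarrow> depth F v \<le> m"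
  | (least) h where "h \<in> verts F" "honest_idx w (lab F h)" "lab F h \<le> L" "m < depth F h"
    "\<And>v. v \<in> verts F \<Longrightarrow> honest_idx w (lab F v) \<Longrightarrow> lab F v < lab F h \<Longrightarrow> depth F v \<le> m"
proof -
  define H where "H = {v \<in> verts F. honest_idx w (lab F v) \<and> lab F v \<le> L \<and> m < depth F v}"
  show thesis
  proof (cases "H = {}")
    case True
    then show thesis
      using that(1) unfolding H_def by (auto simp: not_less)
  next
    case False
    then obtain h0 where "h0 \<in> H"
      by blast
    then obtain h where h: "h \<in> H" and least: "\<And>v. v \<in> H \<Longrightarrow> lab F h \<le> lab F v"
      using ex_has_least_nat[of "\<lambda>v. v \<in> H" h0 "lab F"] by blast
    show thesis
    proof (rule that(2))
      show "h \<in> verts F" "honest_idx w (lab F h)" "lab F h \<le> L" "m < depth F h"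
        using h unfolding H_def by auto
      show "depth F v \<le> m" if "v \<in> verts F" "honest_idx w (lab F v)" "lab F v < lab F h" for v
        using least[of v] h that unfolding H_def by fastforce
    qed
  qed
qed

lemma balanced_pair_bound_pos: "is_fork F w \<Longrightarrow> balanced_pair F w B L m s1 s2 \<Longrightarrow> 0 < B"
  unfolding balanced_pair_def is_tine_def is_fork_def by (metis IntI hd_in_set)

lemma balanced_pair_take:
  assumes s: "is_tine F s" and t: "is_tine F t" and len: "tine_len s \<le> tine_len t"
    and labs: "\<forall>v \<in> set s \<union> set (take (Suc (tine_len s)) t). lab F v \<le> L"
    and honest: "\<forall>v \<in> verts F. honest_idx w (lab F v) \<and> lab F v \<le> L \<longrightarrow> depth F v \<le> tine_len s"
    and common: "\<forall>v \<in> set s \<inter> set t. lab F v < B"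
  shows "balanced_pair F w B L (tine_len s) s (take (Suc (tine_len s)) t)"
  using assms is_tine_take[OF t] tine_len_take[OF len]
  unfolding balanced_pair_def by (auto dest: in_set_takeD)

lemma balanced_pair_least_deeper:
  assumes fork: "is_fork F w" and t1: "is_tine F t1" and a1: "a \<in> set t1"
    and t3: "is_tine F t3" "a \<notin> set t3" and deeper: "tine_len t1 < tine_len t3"
    and lab1: "tine_lab F t1 < tine_lab F t3"
    and least: "\<And>v. v \<in> verts F \<Longrightarrow> honest_idx w (lab F v) \<Longrightarrow> lab F v < tine_lab F t3 \<Longrightarrow>
      depth F v \<le> tine_len t1"
  shows "balanced_pair F w (lab F a) (tine_lab F t3 - 1) (tine_len t1) t1 (take (Suc (tine_len t1)) t3)"
proof (rule balanced_pair_take[OF t1 t3(1)])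
  show "\<forall>v \<in> set t1 \<union> set (take (Suc (tine_len t1)) t3). lab F v \<le> tine_lab F t3 - 1"
    using lab_le_tine_lab[OF fork t1] lab_take_less[OF fork t3(1) deeper] lab1 by fastforce
  show "\<forall>v \<in> verts F. honest_idx w (lab F v) \<and> lab F v \<le> tine_lab F t3 - 1 \<longrightarrow> depth F v \<le> tine_len t1"
    using least lab1 by fastforce
  show "\<forall>v \<in> set t1 \<inter> set t3. lab F v < lab F a"
    using lab_common_less[OF fork t1 t3(1) _ _ a1 t3(2)] by blast
qed (use deeper in simp)

lemma ex_balanced_pair:
  assumes fork: "is_fork F w" and t2: "viable F w t2" and a2: "a \<notin> set t2"
  shows "viable F w t1 \<Longrightarrow> a \<in> set t1 \<Longrightarrow> tine_lab F t1 \<le> tine_lab F t2 \<Longrightarrow>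
    \<exists>L m s1 s2. balanced_pair F w (lab F a) L m s1 s2 \<and> tine_lab F t1 \<le> L \<and> L \<le> length w"
proof (induction "tine_len t2 - tine_len t1" arbitrary: t1 rule: less_induct)
  case less
  note t1 = less.prems(1) and a1 = less.prems(2) and lab12 = less.prems(3)
  have tree: "rooted_tree F"
    using fork by (rule is_fork_rooted_tree)
  have T1: "is_tine F t1" and T2: "is_tine F t2"
    using t1 t2 unfolding viable_def by simp_all
  have lab2: "tine_lab F t2 \<le> length w"
    using tine_lab_le_length[OF fork T2] .
  have labs: "\<forall>v \<in> set t1 \<union> set t2. lab F v \<le> tine_lab F t2"
    using lab_le_tine_lab[OF fork T1] lab_le_tine_lab[OF fork T2] lab12 by fastforce
  have common: "\<forall>v \<in> set t1 \<inter> set t2. lab F v < lab F a"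
    using lab_common_less[OF fork T1 T2 _ _ a1 a2] by blast
  show ?case
  proof (cases "tine_len t2 \<le> tine_len t1")
    case True
    have "balanced_pair F w (lab F a) (tine_lab F t2) (tine_len t2) t2 (take (Suc (tine_len t2)) t1)"
      using labs common viable_depth_le[OF t2]
      by (intro balanced_pair_take[OF T2 T1 True]) (auto dest: in_set_takeD)
    then show ?thesis
      using lab12 lab2 by blast
  next
    case False
    then show ?thesis
    proof (cases rule: honest_depth_le_or_least_deeperE[of F w "tine_lab F t2" "tine_len t1"])
      case shallow
      have "balanced_pair F w (lab F a) (tine_lab F t2) (tine_len t1) t1 (take (Suc (tine_len t1)) t2)"
        using labs common shallow False
        by (intro balanced_pair_take[OF T1 T2]) (auto dest: in_set_takeD)
      then show ?thesis
        using lab12 lab2 by blast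
    next
      case (least h)
      obtain t3 where t3: "is_tine F t3" "last t3 = h"
        using ex_tine_to[OF tree least(1)] by blast
      have len3: "tine_len t3 = depth F h"
        using depth_last[OF tree t3(1)] t3(2) by simp
      have lab3: "tine_lab F t3 = lab F h"
        unfolding tine_lab_def t3(2) ..
      have lab1: "tine_lab F t1 < lab F h"
        using viable_depth_le[OF t1 least(1,2)] least(4) by force
      show ?thesis
      proof (cases "a \<in> set t3")
        case True
        have "viable F w t3"
          using viable_if_honest_last[OF fork t3(1)] t3(2) least(2) by simp
        moreover have "tine_len t2 - tine_len t3 < tine_len t2 - tine_len t1"
          using viable_depth_le[OF t2 least(1-3)] len3 least(4) by linarith
        ultimately show ?thesis
          using less.hyps[of t3] True lab3 lab1 least(3) by fastforce
      next
        case False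
        have "balanced_pair F w (lab F a) (lab F h - 1) (tine_len t1) t1 (take (Suc (tine_len t1)) t3)"
          using balanced_pair_least_deeper[OF fork T1 a1 t3(1) False] len3 lab3 lab1 least by simp
        then show ?thesis
          using lab1 least(3) lab2 by (intro exI) auto
      qed
    qed
  qed
qed

lemma not_slot_CPE:
  assumes fork: "is_fork F w" and not_CP: "\<not> slot_CP k F w"
  obtains t1 t2 a where "viable F w t1" "viable F w t2" "tine_lab F t1 \<le> tine_lab F t2"
    "a \<in> set t1" "a \<notin> set t2" "lab F a + k \<le> tine_lab F t1"
proof -
  obtain t1 t2 where t: "viable F w t1" "viable F w t2" "tine_lab F t1 \<le> tine_lab F t2"
    and not_prefix: "\<not> prefix (trim F k t1) t2"
    using not_CP unfolding slot_CP_def by blast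
  have tree: "rooted_tree F"
    using fork by (rule is_fork_rooted_tree)
  have T1: "is_tine F t1" and T2: "is_tine F t2"
    using t unfolding viable_def by simp_all
  have nonempty: "trim F k t1 \<noteq> []"
    using not_prefix by auto
  define a where "a = last (trim F k t1)"
  have "a \<in> set (trim F k t1)"
    unfolding a_def using nonempty by simp
  then have "a \<in> set t1" "lab F a + k \<le> tine_lab F t1"
    unfolding trim_def by auto
  moreover have "a \<notin> set t2"
    using prefix_if_last_in_tine[OF tree T1 T2 trim_is_prefix[OF fork T1] nonempty] not_prefix
    unfolding a_def by blast
  ultimately show thesis
    using that t by blast
qed

theorem theorem3:
  fixes k T :: nat and w :: "bool list"
  assumes "length w = T"
    and "violates_slot_CP k w"
  shows "\<exists>x y z. w = x @ y @ z \<and> length y \<ge> k + 1 \<and>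
           (\<exists>F. is_fork F (x @ y) \<and> x_balanced F x)"
proof -
  obtain F where fork: "is_fork F w" and "\<not> slot_CP k F w"
    using assms(2) unfolding violates_slot_CP_def by blast
  then obtain t1 t2 a where "viable F w t1" "viable F w t2" "tine_lab F t1 \<le> tine_lab F t2"
    and a: "a \<in> set t1" "a \<notin> set t2" "lab F a + k \<le> tine_lab F t1"
    by (rule not_slot_CPE)
  then obtain L m s1 s2 where pair: "balanced_pair F w (lab F a) L m s1 s2"
    and L: "tine_lab F t1 \<le> L" "L \<le> length w"
    using ex_balanced_pair[OF fork] by blast
  obtain G where G: "is_fork G (take L w)" "x_balanced G (take (lab F a - 1) w)"
    using ex_x_balanced_fork_if_balanced_pair[OF fork pair L(2)] by blast
  have a_pos: "0 < lab F a"
    using balanced_pair_bound_pos[OF fork pair] .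
  define x y z where "x = take (lab F a - 1) w" and "y = drop (lab F a - 1) (take L w)"
    and "z = drop L w"
  have "lab F a - 1 \<le> L"
    using a(3) L(1) by linarith
  then have xy: "x @ y = take L w"
    unfolding x_def y_def using append_take_drop_id[of "lab F a - 1" "take L w"]
    by (simp add: min_absorb1)
  then have "w = x @ y @ z"
    unfolding z_def by (metis append.assoc append_take_drop_id)
  moreover have "length y \<ge> k + 1"
    unfolding y_def using a(3) a_pos L by simp
  ultimately show ?thesis
    using G xy unfolding x_def by metis
qed

end
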